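(* Let $V=[n]$, $r\ge0$, and $A,B\subseteq V$. Then $A$ and $B$ are $r$-orthogonal if and only if $$\big(|A\cap B|<r \ \vee\ A\subseteq B\ \vee\ B\subseteq A\ \vee\ |\overline{A\cup B}|<r\ \vee\ |A\cap B|=|\overline{A\cup B}|=r\big)$$ and $$\big(|A\setminus B|<r\ \vee\ A\cap B=\emptyset\ \vee\ \overline{A\cup B}=\emptyset\ \vee\ |B\setminus A|<r\ \vee\ |A\setminus B|=|B\setminus A|=r\big).$$
   Context: $\overline X=V\setminus X$. Hypergraphs on $V$ are identified with their hyperedge sets. $\mathcal K_r(n)$ is the class of hypergraphs $\mathcal E$ on $V$ satisfying: (R0) every $X\subseteq V$ with $|X|\le r$ is in $\mathcal E$; (R1) $A\in\mathcal E\Rightarrow V\setminus A\in\mathcal E$; (R2) $A,B\in\mathcal E$ and $|A\cap B|\ge r\Rightarrow A\cup B\in\mathcal E$. $\mathcal K^0_r(n)$ is the class satisfying (R0) and (R1) only. $\mathrm{cl}_r(H)$ (resp. $\mathrm{cl}^0_r(H)$) is the intersection of all hypergraphs in $\mathcal K_r(n)$ (resp. $\mathcal K^0_r(n)$) containing $H$. $A,B$ are $r$-orthogonal if $\mathrm{cl}_r(\{A,B\})=\mathrm{cl}^0_r(\{A,B\})$, where $\{A,B\}$ is the hypergraph with hyperedges $A,B$. *)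

theory Defs
  imports Main
begin

definition ground :: "nat \<Rightarrow> nat set" where
  "ground n = {1..n}"

definition hypergraph_on :: "nat \<Rightarrow> nat set set \<Rightarrow> bool" where
  "hypergraph_on n E \<longleftrightarrow> E \<subseteq> Pow (ground n)"

definition K0 :: "nat \<Rightarrow> nat \<Rightarrow> nat set set set" where
  "K0 r n = {E. hypergraph_on n E
     \<and> (\<forall>X. X \<subseteq> ground n \<and> card X \<le> r \<longrightarrow> X \<in> E)
     \<and> (\<forall>A\<in>E. ground n - A \<in> E)}"

text \<open>The class K_r(n): conditions (R0), (R1), (R2).\<close>
definition K :: "nat \<Rightarrow> nat \<Rightarrow> nat set set set" where
  "K r n = {E. E \<in> K0 r n
     \<and> (\<forall>A\<in>E. \<forall>B\<in>E. card (A \<inter> B) \<ge> r \<longrightarrow> A \<union> B \<in> E)}"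

definition cl :: "nat \<Rightarrow> nat \<Rightarrow> nat set set \<Rightarrow> nat set set" where
  "cl r n H = \<Inter> {E. E \<in> K r n \<and> H \<subseteq> E}"

definition cl0 :: "nat \<Rightarrow> nat \<Rightarrow> nat set set \<Rightarrow> nat set set" where
  "cl0 r n H = \<Inter> {E. E \<in> K0 r n \<and> H \<subseteq> E}"

definition r_orthogonal :: "nat \<Rightarrow> nat \<Rightarrow> nat set \<Rightarrow> nat set \<Rightarrow> bool" where
  "r_orthogonal r n A B \<longleftrightarrow> cl r n {A, B} = cl0 r n {A, B}"

end

theory Submission
  imports Defs
begin

text \<open>Every member of \<open>K r n\<close> lies in \<open>K0 r n\<close>, so the two closures of \<open>{A, B}\<close> agree
  exactly when \<open>cl0 r n {A, B}\<close> is closed under (R2). That family consists of \<open>A\<close>, \<open>B\<close>, their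
  complements and all sets of size or co-size at most \<open>r\<close>. Unions with a set of size or co-size
  at most \<open>r\<close> stay in the family, and so does the union of \<open>A\<close> or \<open>B\<close> with itself or its
  complement. What remains are the four unions \<open>P \<union> Q\<close> with \<open>P \<in> {A, V - A}\<close> and
  \<open>Q \<in> {B, V - B}\<close>. Since \<open>cl0\<close> does not change when \<open>A\<close> or \<open>B\<close> is complemented, all four are
  instances of the pair \<open>(A, B)\<close>, for which (R2) holds iff \<open>|A \<inter> B| < r\<close>, \<open>A \<subseteq> B\<close>, \<open>B \<subseteq> A\<close>
  or \<open>|V - (A \<union> B)| \<le> r\<close>. The two conditions of the theorem combine these four statements
  in pairs.\<close>

lemma finite_ground [simp]: "finite (ground n)"
  by (simp add: ground_def)

lemma finite_subset_ground: "X \<subseteq> ground n \<Longrightarrow> finite X"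
  using finite_subset finite_ground by blast

lemma subset_if_card_le_card_Int:
  assumes "finite X" and "card X \<le> card (X \<inter> Y)"
  shows "X \<subseteq> Y"
  using card_seteq[OF assms(1) Int_lower1 assms(2)] by blast

subsection \<open>The two closure operators\<close>

lemma K_subset_K0: "K r n \<subseteq> K0 r n"
  unfolding K_def by auto

lemma Pow_ground_in_K: "Pow (ground n) \<in> K r n"
  unfolding K_def K0_def hypergraph_on_def by auto

lemma cl_in_K:
  assumes "H \<subseteq> Pow (ground n)"
  shows "cl r n H \<in> K r n"
proof -
  let ?F = "{E. E \<in> K r n \<and> H \<subseteq> E}"
  have "Pow (ground n) \<in> ?F"
    using assms Pow_ground_in_K by auto
  then have "hypergraph_on n (\<Inter>?F)"
    unfolding hypergraph_on_def by blast
  moreover have "X \<in> \<Inter>?F" if "X \<subseteq> ground n" "card X \<le> r" for X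
    using that unfolding K_def K0_def by auto
  moreover have "ground n - X \<in> \<Inter>?F" if "X \<in> \<Inter>?F" for X
    using that unfolding K_def K0_def by auto
  moreover have "X \<union> Y \<in> \<Inter>?F" if "X \<in> \<Inter>?F" "Y \<in> \<Inter>?F" "r \<le> card (X \<inter> Y)" for X Y
    using that unfolding K_def by auto
  ultimately show ?thesis
    unfolding cl_def K_def K0_def by blast
qed

lemma cl_eq_cl0_iff:
  assumes "H \<subseteq> Pow (ground n)"
  shows "cl r n H = cl0 r n H \<longleftrightarrow> cl0 r n H \<in> K r n"
proof
  assume "cl r n H = cl0 r n H"
  then show "cl0 r n H \<in> K r n"
    using cl_in_K[of H n r] assms by simp
next
  assume "cl0 r n H \<in> K r n"
  moreover have "H \<subseteq> cl0 r n H"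
    unfolding cl0_def by blast
  ultimately have "cl r n H \<subseteq> cl0 r n H"
    unfolding cl_def by blast
  moreover have "cl0 r n H \<subseteq> cl r n H"
    unfolding cl_def cl0_def using K_subset_K0 by blast
  ultimately show "cl r n H = cl0 r n H"
    by blast
qed

lemma K0_mem_compl_iff:
  assumes "E \<in> K0 r n" and "X \<subseteq> ground n"
  shows "ground n - X \<in> E \<longleftrightarrow> X \<in> E"
proof -
  have "ground n - (ground n - X) = X"
    using assms(2) by blast
  moreover have "ground n - Y \<in> E" if "Y \<in> E" for Y
    using assms(1) that unfolding K0_def by blast
  ultimately show ?thesis
    by metis
qed

lemma cl0_insert_compl:
  assumes "X \<subseteq> ground n"
  shows "cl0 r n (insert (ground n - X) H) = cl0 r n (insert X H)"
proof -
  have "insert (ground n - X) H \<subseteq> E \<longleftrightarrow> insert X H \<subseteq> E" if "E \<in> K0 r n" for E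
    using K0_mem_compl_iff[OF that assms] by simp
  then have "{E. E \<in> K0 r n \<and> insert (ground n - X) H \<subseteq> E} = {E. E \<in> K0 r n \<and> insert X H \<subseteq> E}"
    by blast
  then show ?thesis
    unfolding cl0_def by simp
qed

subsection \<open>The explicit form of \<open>cl0\<close>\<close>

definition extreme_sets :: "nat \<Rightarrow> nat \<Rightarrow> nat set set" where
  "extreme_sets r n = {X. X \<subseteq> ground n \<and> (card X \<le> r \<or> card (ground n - X) \<le> r)}"

lemma extreme_sets_closure_in_K0:
  assumes "H \<subseteq> Pow (ground n)"
  shows "extreme_sets r n \<union> H \<union> (\<lambda>X. ground n - X) ` H \<in> K0 r n"
proof -
  let ?E = "extreme_sets r n \<union> H \<union> (\<lambda>X. ground n - X) ` H"
  have "ground n - X \<in> ?E" if "X \<in> ?E" for X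
    using that
  proof (elim UnE)
    assume X: "X \<in> extreme_sets r n"
    then have "X \<subseteq> ground n"
      by (simp add: extreme_sets_def)
    then have "ground n - (ground n - X) = X"
      by blast
    then have "ground n - X \<in> extreme_sets r n"
      using X unfolding extreme_sets_def by auto
    then show ?thesis
      by blast
  next
    assume "X \<in> (\<lambda>X. ground n - X) ` H"
    then obtain Y where "Y \<in> H" and "X = ground n - Y"
      by blast
    moreover have "ground n - (ground n - Y) = Y"
      using \<open>Y \<in> H\<close> assms by blast
    ultimately show ?thesis
      by simp
  qed blast
  moreover have "?E \<subseteq> Pow (ground n)"
    using assms unfolding extreme_sets_def by blast
  ultimately show ?thesis
    unfolding K0_def hypergraph_on_def extreme_sets_def by blast
qed

lemma cl0_eq:
  assumes "H \<subseteq> Pow (ground n)"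
  shows "cl0 r n H = extreme_sets r n \<union> H \<union> (\<lambda>X. ground n - X) ` H"
proof (rule antisym)
  show "cl0 r n H \<subseteq> extreme_sets r n \<union> H \<union> (\<lambda>X. ground n - X) ` H"
    unfolding cl0_def using extreme_sets_closure_in_K0[OF assms] by blast
  have "extreme_sets r n \<subseteq> E" if "E \<in> K0 r n" for E
  proof
    fix X assume "X \<in> extreme_sets r n"
    then have "X \<subseteq> ground n" and "card X \<le> r \<or> card (ground n - X) \<le> r"
      unfolding extreme_sets_def by auto
    then show "X \<in> E"
      using that K0_mem_compl_iff[OF that] unfolding K0_def by blast
  qed
  moreover have "ground n - X \<in> E" if "E \<in> K0 r n" "X \<in> E" for E X
    using that unfolding K0_def by blast
  ultimately show "extreme_sets r n \<union> H \<union> (\<lambda>X. ground n - X) ` H \<subseteq> cl0 r n H"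
    unfolding cl0_def by blast
qed

lemma cl0_in_K0:
  assumes "H \<subseteq> Pow (ground n)"
  shows "cl0 r n H \<in> K0 r n"
  using assms by (simp add: cl0_eq extreme_sets_closure_in_K0)

lemma cl0_pair_eq:
  assumes "A \<subseteq> ground n" and "B \<subseteq> ground n"
  shows "cl0 r n {A, B} = extreme_sets r n \<union> {A, B, ground n - A, ground n - B}"
  using assms by (simp add: cl0_eq Un_assoc insert_commute)

subsection \<open>Closure of \<open>cl0 {A, B}\<close> under (R2)\<close>

definition pair_union_closed :: "nat \<Rightarrow> nat \<Rightarrow> nat set \<Rightarrow> nat set \<Rightarrow> bool" where
  "pair_union_closed r n P Q \<longleftrightarrow> (r \<le> card (P \<inter> Q) \<longrightarrow> P \<union> Q \<in> cl0 r n {P, Q})"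

lemma pair_union_closed_commute:
  "pair_union_closed r n P Q \<longleftrightarrow> pair_union_closed r n Q P"
  unfolding pair_union_closed_def by (simp add: Int_commute Un_commute insert_commute)

lemma pair_union_closed_iff:
  assumes "P \<subseteq> ground n" and "Q \<subseteq> ground n"
  shows "pair_union_closed r n P Q \<longleftrightarrow>
    card (P \<inter> Q) < r \<or> P \<subseteq> Q \<or> Q \<subseteq> P \<or> card (ground n - (P \<union> Q)) \<le> r"
proof -
  have "P \<union> Q \<in> {P, Q, ground n - P, ground n - Q} \<longleftrightarrow> P \<subseteq> Q \<or> Q \<subseteq> P"
    using assms by auto
  moreover have "P \<union> Q \<in> extreme_sets r n \<longleftrightarrow>
      card (P \<union> Q) \<le> r \<or> card (ground n - (P \<union> Q)) \<le> r"
    using assms by (simp add: extreme_sets_def)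
  ultimately have mem: "P \<union> Q \<in> cl0 r n {P, Q} \<longleftrightarrow>
      card (P \<union> Q) \<le> r \<or> card (ground n - (P \<union> Q)) \<le> r \<or> P \<subseteq> Q \<or> Q \<subseteq> P"
    using assms by (simp only: cl0_pair_eq Un_iff) blast
  have "P \<subseteq> Q" if "card (P \<union> Q) \<le> r" "r \<le> card (P \<inter> Q)"
  proof -
    have "(P \<union> Q) \<inter> (P \<inter> Q) = P \<inter> Q"
      by blast
    then have "P \<union> Q \<subseteq> P \<inter> Q"
      using subset_if_card_le_card_Int[of "P \<union> Q" "P \<inter> Q"] that assms
      by (simp add: finite_subset_ground)
    then show ?thesis
      by blast
  qed
  then show ?thesis
    unfolding pair_union_closed_def mem using not_le by blast
qed

lemma cl0_pair_compl_eq: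
  assumes "A \<subseteq> ground n" and "B \<subseteq> ground n"
    and "P \<in> {A, ground n - A}" and "Q \<in> {B, ground n - B}"
  shows "cl0 r n {P, Q} = cl0 r n {A, B}"
proof -
  have "cl0 r n {P, Q} = cl0 r n {A, Q}"
    using assms(3) cl0_insert_compl[OF assms(1), of r "{Q}"] by auto
  also have "\<dots> = cl0 r n {A, B}"
    using assms(4) cl0_insert_compl[OF assms(2), of r "{A}"] by (auto simp: insert_commute)
  finally show ?thesis .
qed

lemma union_extreme_mem:
  assumes "extreme_sets r n \<subseteq> S" and Z: "Z \<in> extreme_sets r n"
    and "W \<in> S" and "W \<subseteq> ground n" and "r \<le> card (Z \<inter> W)"
  shows "Z \<union> W \<in> S"
proof (cases "card Z \<le> r")
  case True
  have "finite Z"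
    using Z finite_subset_ground unfolding extreme_sets_def by blast
  moreover have "card Z \<le> card (Z \<inter> W)"
    using True assms(5) by linarith
  ultimately have "Z \<subseteq> W"
    by (rule subset_if_card_le_card_Int)
  then show ?thesis
    using assms(3) by (simp add: Un_absorb1)
next
  case False
  then have "card (ground n - Z) \<le> r" and "Z \<subseteq> ground n"
    using Z unfolding extreme_sets_def by auto
  moreover have "card (ground n - (Z \<union> W)) \<le> card (ground n - Z)"
    by (rule card_mono) auto
  ultimately have "Z \<union> W \<in> extreme_sets r n"
    using assms(4) unfolding extreme_sets_def by auto
  then show ?thesis
    using assms(1) by blast
qed

lemma union_generators_mem_cl0_pair:
  assumes A: "A \<subseteq> ground n" and B: "B \<subseteq> ground n"
    and pairs: "\<forall>P\<in>{A, ground n - A}. \<forall>Q\<in>{B, ground n - B}. pair_union_closed r n P Q"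
    and X: "X \<in> {A, ground n - A} \<or> X \<in> {B, ground n - B}"
    and Y: "Y \<in> {A, ground n - A} \<or> Y \<in> {B, ground n - B}"
    and r: "r \<le> card (X \<inter> Y)"
  shows "X \<union> Y \<in> cl0 r n {A, B}"
proof -
  let ?S = "cl0 r n {A, B}"
  note S = cl0_pair_eq[OF A B, of r]
  have same_class: "X \<union> Y \<in> ?S" if "X \<in> {C, ground n - C}" "Y \<in> {C, ground n - C}" "C \<subseteq> ground n" for C
  proof -
    have "ground n \<in> ?S" and "X \<in> ?S"
      using X unfolding S extreme_sets_def by auto
    moreover have "X \<union> Y = X \<or> X \<union> Y = ground n"
      using that by blast
    ultimately show ?thesis
      by auto
  qed
  have cross: "Z \<union> W \<in> ?S" if "Z \<in> {A, ground n - A}" "W \<in> {B, ground n - B}" "r \<le> card (Z \<inter> W)" for Z W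
    using pairs that cl0_pair_compl_eq[OF A B that(1,2)] unfolding pair_union_closed_def by blast
  consider
      "X \<in> {A, ground n - A}" "Y \<in> {A, ground n - A}"
    | "X \<in> {B, ground n - B}" "Y \<in> {B, ground n - B}"
    | "X \<in> {A, ground n - A}" "Y \<in> {B, ground n - B}"
    | "X \<in> {B, ground n - B}" "Y \<in> {A, ground n - A}"
    using X Y by meson
  then show ?thesis
  proof cases
    case 1
    then show ?thesis
      using same_class A by blast
  next
    case 2
    then show ?thesis
      using same_class B by blast
  next
    case 3
    then show ?thesis
      using cross r by blast
  next
    case 4
    then show ?thesis
      using cross[of Y X] r by (simp add: Int_commute Un_commute)
  qed
qed

lemma union_mem_cl0_pair:
  assumes A: "A \<subseteq> ground n" and B: "B \<subseteq> ground n"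
    and pairs: "\<forall>P\<in>{A, ground n - A}. \<forall>Q\<in>{B, ground n - B}. pair_union_closed r n P Q"
    and X: "X \<in> cl0 r n {A, B}" and Y: "Y \<in> cl0 r n {A, B}" and r: "r \<le> card (X \<inter> Y)"
  shows "X \<union> Y \<in> cl0 r n {A, B}"
proof -
  note S = cl0_pair_eq[OF A B, of r]
  have "X \<subseteq> ground n" and "Y \<subseteq> ground n"
    using X Y A B unfolding S extreme_sets_def by blast+
  consider "X \<in> extreme_sets r n" | "Y \<in> extreme_sets r n"
    | "X \<in> {A, ground n - A} \<or> X \<in> {B, ground n - B}" "Y \<in> {A, ground n - A} \<or> Y \<in> {B, ground n - B}"
    using X Y unfolding S by blast
  then show ?thesis
  proof cases
    case 1
    then show ?thesis
      using union_extreme_mem[OF _ 1 Y \<open>Y \<subseteq> ground n\<close> r] unfolding S by blast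
  next
    case 2
    have "r \<le> card (Y \<inter> X)"
      using r by (simp add: Int_commute)
    then have "Y \<union> X \<in> cl0 r n {A, B}"
      using union_extreme_mem[OF _ 2 X \<open>X \<subseteq> ground n\<close>] unfolding S by blast
    then show ?thesis
      by (simp add: Un_commute)
  next
    case 3
    then show ?thesis
      using union_generators_mem_cl0_pair[OF A B pairs _ _ r] by blast
  qed
qed

lemma cl0_pair_in_K_iff:
  assumes A: "A \<subseteq> ground n" and B: "B \<subseteq> ground n"
  shows "cl0 r n {A, B} \<in> K r n \<longleftrightarrow>
    (\<forall>P\<in>{A, ground n - A}. \<forall>Q\<in>{B, ground n - B}. pair_union_closed r n P Q)"
proof
  assume K: "cl0 r n {A, B} \<in> K r n"
  show "\<forall>P\<in>{A, ground n - A}. \<forall>Q\<in>{B, ground n - B}. pair_union_closed r n P Q"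
  proof (intro ballI)
    fix P Q assume P: "P \<in> {A, ground n - A}" and Q: "Q \<in> {B, ground n - B}"
    have "P \<in> cl0 r n {A, B}" and "Q \<in> cl0 r n {A, B}"
      using P Q unfolding cl0_pair_eq[OF A B] by auto
    then have "r \<le> card (P \<inter> Q) \<longrightarrow> P \<union> Q \<in> cl0 r n {A, B}"
      using K unfolding K_def by blast
    then show "pair_union_closed r n P Q"
      unfolding pair_union_closed_def cl0_pair_compl_eq[OF A B P Q] .
  qed
next
  assume "\<forall>P\<in>{A, ground n - A}. \<forall>Q\<in>{B, ground n - B}. pair_union_closed r n P Q"
  then show "cl0 r n {A, B} \<in> K r n"
    using union_mem_cl0_pair[OF A B] cl0_in_K0[of "{A, B}" n r] A B unfolding K_def by auto
qed

lemma pair_union_closed_compl_compl: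
  assumes "A \<subseteq> ground n" and "B \<subseteq> ground n"
  shows "pair_union_closed r n (ground n - A) (ground n - B) \<longleftrightarrow>
    card (ground n - (A \<union> B)) < r \<or> A \<subseteq> B \<or> B \<subseteq> A \<or> card (A \<inter> B) \<le> r"
proof -
  have "(ground n - A) \<inter> (ground n - B) = ground n - (A \<union> B)"
    and "ground n - ((ground n - A) \<union> (ground n - B)) = A \<inter> B"
    and "ground n - A \<subseteq> ground n - B \<longleftrightarrow> B \<subseteq> A"
    and "ground n - B \<subseteq> ground n - A \<longleftrightarrow> A \<subseteq> B"
    using assms by blast+
  then show ?thesis
    by (auto simp: pair_union_closed_iff)
qed

lemma pair_union_closed_compl_right:
  assumes "A \<subseteq> ground n" and "B \<subseteq> ground n"
  shows "pair_union_closed r n A (ground n - B) \<longleftrightarrow>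
    card (A - B) < r \<or> A \<inter> B = {} \<or> ground n - (A \<union> B) = {} \<or> card (B - A) \<le> r"
proof -
  have "A \<inter> (ground n - B) = A - B"
    and "ground n - (A \<union> (ground n - B)) = B - A"
    and "A \<subseteq> ground n - B \<longleftrightarrow> A \<inter> B = {}"
    and "ground n - B \<subseteq> A \<longleftrightarrow> ground n - (A \<union> B) = {}"
    using assms by blast+
  then show ?thesis
    using assms by (auto simp: pair_union_closed_iff)
qed

lemma pair_union_closed_compl_left:
  assumes "A \<subseteq> ground n" and "B \<subseteq> ground n"
  shows "pair_union_closed r n (ground n - A) B \<longleftrightarrow>
    card (B - A) < r \<or> A \<inter> B = {} \<or> ground n - (A \<union> B) = {} \<or> card (A - B) \<le> r"
proof -
  have "pair_union_closed r n (ground n - A) B \<longleftrightarrow> pair_union_closed r n B (ground n - A)"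
    by (rule pair_union_closed_commute)
  also have "\<dots> \<longleftrightarrow>
      card (B - A) < r \<or> B \<inter> A = {} \<or> ground n - (B \<union> A) = {} \<or> card (A - B) \<le> r"
    by (rule pair_union_closed_compl_right[OF assms(2,1)])
  finally show ?thesis
    by (simp only: Int_commute Un_commute)
qed

lemma lt_or_le_pair_iff:
  fixes x y r :: nat
  shows "(x < r \<or> P \<or> y \<le> r) \<and> (y < r \<or> P \<or> x \<le> r) \<longleftrightarrow>
    x < r \<or> P \<or> y < r \<or> (x = r \<and> y = r)"
  by auto

theorem mainTheorem14:
  fixes n r :: nat and A B :: "nat set"
  assumes "A \<subseteq> ground n" and "B \<subseteq> ground n"
  shows "r_orthogonal r n A B \<longleftrightarrow>
    ((card (A \<inter> B) < r \<or> A \<subseteq> B \<or> B \<subseteq> A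
      \<or> card (ground n - (A \<union> B)) < r
      \<or> (card (A \<inter> B) = r \<and> card (ground n - (A \<union> B)) = r))
     \<and>
     (card (A - B) < r \<or> A \<inter> B = {} \<or> ground n - (A \<union> B) = {}
      \<or> card (B - A) < r
      \<or> (card (A - B) = r \<and> card (B - A) = r)))"
proof -
  let ?V = "ground n"
  have "r_orthogonal r n A B \<longleftrightarrow> cl0 r n {A, B} \<in> K r n"
    unfolding r_orthogonal_def using assms by (simp add: cl_eq_cl0_iff)
  also have "\<dots> \<longleftrightarrow> pair_union_closed r n A B \<and> pair_union_closed r n (?V - A) (?V - B)
      \<and> pair_union_closed r n A (?V - B) \<and> pair_union_closed r n (?V - A) B"
    using assms by (simp add: cl0_pair_in_K_iff conj_ac)
  also have "\<dots> \<longleftrightarrow>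
      ((card (A \<inter> B) < r \<or> (A \<subseteq> B \<or> B \<subseteq> A) \<or> card (?V - (A \<union> B)) \<le> r)
        \<and> (card (?V - (A \<union> B)) < r \<or> (A \<subseteq> B \<or> B \<subseteq> A) \<or> card (A \<inter> B) \<le> r))
      \<and> ((card (A - B) < r \<or> (A \<inter> B = {} \<or> ?V - (A \<union> B) = {}) \<or> card (B - A) \<le> r)
        \<and> (card (B - A) < r \<or> (A \<inter> B = {} \<or> ?V - (A \<union> B) = {}) \<or> card (A - B) \<le> r))"
    by (simp only: pair_union_closed_iff[OF assms] pair_union_closed_compl_compl[OF assms]
        pair_union_closed_compl_right[OF assms] pair_union_closed_compl_left[OF assms]
        conj_assoc disj_assoc)
  finally show ?thesis
    unfolding lt_or_le_pair_iff by (simp only: disj_assoc)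
qed

end
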